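(* Let $n\ge4$, let $C=\mathrm{circ}(1,0,\ldots,0,-1)$ of order $n-1$, let $X=(CC^T+I_{n-1})^{-1}(J_{n-1}-nI_{n-1})$ and $Y=-C^TX$. Then $Y=\mathrm{circ}(d_0,d_1,\ldots,d_{n-2})$ where \[d_0=\frac{2n}{\sqrt{5}}\left[\frac{(3+\sqrt{5})^{n-2}-2^{n-2}}{2^{n-1}-(3+\sqrt{5})^{n-1}} -\frac{(3-\sqrt{5})^{n-2}-2^{n-2}}{2^{n-1}-(3-\sqrt{5})^{n-1}}\right]\] and for $j=1,2,\ldots,n-2$, \[d_j=-\frac{n2^{n-j}}{5+\sqrt{5}}\left[\frac{(3+\sqrt{5})^{j}}{2^{n-1}-(3+\sqrt{5})^{n-1}} +\frac{2(3-\sqrt{5})^{j-1}}{2^{n-1}-(3-\sqrt{5})^{n-1}}\right].\]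
   Context: For $c_0,\dots,c_{k-1}$, $\mathrm{circ}(c_0,\ldots,c_{k-1})$ denotes the $k\times k$ circulant matrix whose $(i,j)$-entry is $c_{(j-i)\bmod k}$. $J_{n-1}$ is the $(n-1)\times(n-1)$ all-ones matrix and $I_{n-1}$ the identity. Note $CC^T+I_{n-1}=\mathrm{circ}(3,-1,0,\ldots,0,-1)$ is invertible. ($X,Y$ are blocks of the Moore–Penrose inverse of the oriented incidence matrix of the wheel graph $W_n$.) *)

theory Defs
  imports Complex_Main "Jordan_Normal_Form.Matrix"
begin

definition circ_mat :: "nat \<Rightarrow> (nat \<Rightarrow> 'a) \<Rightarrow> 'a mat" where
  "circ_mat k c = mat k k (\<lambda>(i, j). c ((j + k - i) mod k))"

definition mat_inv :: "'a :: semiring_1 mat \<Rightarrow> 'a mat" where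
  "mat_inv A = (THE B. B \<in> carrier_mat (dim_row A) (dim_row A) \<and>
      A * B = 1\<^sub>m (dim_row A) \<and> B * A = 1\<^sub>m (dim_row A))"

definition ones_mat :: "nat \<Rightarrow> 'a :: one mat" where
  "ones_mat k = mat k k (\<lambda>_. 1)"

end

theory Submission
  imports Defs "Jordan_Normal_Form.Determinant"
begin

(*
  All matrices involved are circulant, hence commute, and C^T has zero row sums, so
  C^T (J - n I) = -n C^T. Thus Y = n (C C^T + I)^-1 C^T, and Y = circ(d) amounts to
  (C C^T + I) circ(d) = n C^T, i.e. to the cyclic recurrence
  3 d_m - d_(m-1) - d_(m+1) = n ([m = 0] - [m = 1]).
  It is solved by d_m = f(m) for 0 < m < n - 1 and d_0 = f(n - 1), where
  f(j) = A r^j + B s^j with r, s = (3 + sqrt 5)/2, (3 - sqrt 5)/2 the roots of t^2 = 3t - 1,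
  and A, B are chosen so that f(j + n - 1) - f(j) = n for j = 0, 1.
  The inverse exists because C C^T + I is positive definite.
*)

lemma mod_less_double: "(x::nat) < 2 * k \<Longrightarrow> x mod k = (if x < k then x else x - k)"
  by (simp add: le_mod_geq)

lemma circ_mat_index [simp]:
  "i < k \<Longrightarrow> j < k \<Longrightarrow> circ_mat k c $$ (i, j) = c ((j + k - i) mod k)"
  by (simp add: circ_mat_def)

lemma circ_mat_carrier [simp]: "circ_mat k c \<in> carrier_mat k k"
  by (simp add: circ_mat_def)

lemma circ_mat_dim [simp]: "dim_row (circ_mat k c) = k" "dim_col (circ_mat k c) = k"
  by (simp_all add: circ_mat_def)

lemma circ_mat_cong: "(\<And>m. m < k \<Longrightarrow> a m = b m) \<Longrightarrow> circ_mat k a = circ_mat k b"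
  by (rule eq_matI) auto

lemma circ_mat_eqI: "(\<And>i j. i < k \<Longrightarrow> j < k \<Longrightarrow> A $$ (i, j) = c ((j + k - i) mod k)) \<Longrightarrow>
    A \<in> carrier_mat k k \<Longrightarrow> A = circ_mat k c"
  by (rule eq_matI) auto

definition circ_conv :: "nat \<Rightarrow> (nat \<Rightarrow> 'a :: semiring_0) \<Rightarrow> (nat \<Rightarrow> 'a) \<Rightarrow> nat \<Rightarrow> 'a" where
  "circ_conv k a b m = (\<Sum>l<k. a l * b ((m + k - l) mod k))"

lemma circ_mat_mult: "circ_mat k a * circ_mat k b = circ_mat k (circ_conv k a b)"
proof (rule eq_matI)
  fix i j assume "i < dim_row (circ_mat k (circ_conv k a b))" "j < dim_col (circ_mat k (circ_conv k a b))"
  then have i: "i < k" and j: "j < k" by auto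
  have "(circ_mat k a * circ_mat k b) $$ (i, j) = (\<Sum>l<k. a ((l + k - i) mod k) * b ((j + k - l) mod k))"
    using i j by (simp add: scalar_prod_def lessThan_atLeast0)
  also have "\<dots> = (\<Sum>t<k. a t * b (((j + k - i) mod k + k - t) mod k))"
    by (rule sum.reindex_bij_witness[of _ "\<lambda>t. (t + i) mod k" "\<lambda>l. (l + k - i) mod k"])
       (use i j in \<open>auto simp: mod_less_double\<close>)
  finally show "(circ_mat k a * circ_mat k b) $$ (i, j) = circ_mat k (circ_conv k a b) $$ (i, j)"
    using i j by (simp add: circ_conv_def)
qed auto

lemma circ_conv_commute: "m < k \<Longrightarrow> circ_conv k a b m = circ_conv k b (a :: nat \<Rightarrow> 'a :: comm_semiring_0) m"
  unfolding circ_conv_def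
  by (rule sum.reindex_bij_witness[of _ "\<lambda>l. (m + k - l) mod k" "\<lambda>l. (m + k - l) mod k"])
     (auto simp: mod_less_double mult.commute)

lemma circ_mat_mult_commute:
  "circ_mat k a * circ_mat k b = circ_mat k b * circ_mat k (a :: nat \<Rightarrow> 'a :: comm_semiring_0)"
  unfolding circ_mat_mult by (rule circ_mat_cong) (rule circ_conv_commute)

lemma circ_mat_transpose: "transpose_mat (circ_mat k a) = circ_mat k (\<lambda>m. a ((k - m) mod k))"
  by (rule circ_mat_eqI) (auto simp: mod_less_double ac_simps)

lemma circ_mat_add: "circ_mat k a + circ_mat k b = circ_mat k (\<lambda>m. a m + b m)"
  by (rule eq_matI) auto

lemma circ_mat_minus: "circ_mat k a - circ_mat k b = circ_mat k (\<lambda>m. a m - b m)"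
  by (rule eq_matI) auto

lemma circ_mat_uminus: "- circ_mat k a = circ_mat k (\<lambda>m. - a m)"
  by (rule eq_matI) auto

lemma circ_mat_smult: "x \<cdot>\<^sub>m circ_mat k a = circ_mat k (\<lambda>m. x * a m)"
  by (rule eq_matI) auto

lemma one_mat_circ: "1\<^sub>m k = circ_mat k (\<lambda>m. if m = 0 then 1 else 0)"
  by (rule circ_mat_eqI) (auto simp: mod_less_double)

lemma ones_mat_circ: "ones_mat k = circ_mat k (\<lambda>m. 1)"
  by (rule eq_matI) (auto simp: ones_mat_def)

(* The symbol of the periodic tridiagonal matrix with diagonal \<alpha>, superdiagonal \<beta> and
   subdiagonal \<gamma>, corner entries included. *)

definition tridiag_symbol :: "nat \<Rightarrow> 'a \<Rightarrow> 'a \<Rightarrow> 'a \<Rightarrow> nat \<Rightarrow> 'a :: zero" where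
  "tridiag_symbol k \<alpha> \<beta> \<gamma> m = (if m = 0 then \<alpha> else if m = 1 then \<beta> else if m = k - 1 then \<gamma> else 0)"

lemma circ_conv_tridiag_symbol:
  assumes "3 \<le> k" "m < k"
  shows "circ_conv k (tridiag_symbol k \<alpha> \<beta> \<gamma>) b m =
    \<alpha> * b m + \<beta> * b ((m + k - 1) mod k) + \<gamma> * b ((m + 1) mod k)"
proof -
  have "circ_conv k (tridiag_symbol k \<alpha> \<beta> \<gamma>) b m =
      (\<Sum>l\<in>{0, 1, k - 1}. tridiag_symbol k \<alpha> \<beta> \<gamma> l * b ((m + k - l) mod k))"
    unfolding circ_conv_def
    by (rule sum.mono_neutral_right) (use assms in \<open>auto simp: tridiag_symbol_def\<close>)
  moreover have "k - 1 \<noteq> 0" "k - 1 \<noteq> 1"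
    using assms by auto
  ultimately show ?thesis
    using assms by (simp add: tridiag_symbol_def add.assoc)
qed

lemma circ_mat_tridiag_mult:
  "3 \<le> k \<Longrightarrow> circ_mat k (tridiag_symbol k \<alpha> \<beta> \<gamma>) * circ_mat k b =
    circ_mat k (\<lambda>m. \<alpha> * b m + \<beta> * b ((m + k - 1) mod k) + \<gamma> * b ((m + 1) mod k))"
  unfolding circ_mat_mult by (rule circ_mat_cong) (rule circ_conv_tridiag_symbol)

lemma circ_mat_tridiag_transpose:
  "3 \<le> k \<Longrightarrow>
    transpose_mat (circ_mat k (tridiag_symbol k \<alpha> \<beta> \<gamma>)) = circ_mat k (tridiag_symbol k \<alpha> \<gamma> \<beta>)"
  unfolding circ_mat_transpose by (rule circ_mat_cong) (auto simp: tridiag_symbol_def)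

lemma mat_inv_of_det_nonzero:
  fixes A :: "'a :: field mat"
  assumes A: "A \<in> carrier_mat k k" and "det A \<noteq> 0"
  shows "mat_inv A \<in> carrier_mat k k" "A * mat_inv A = 1\<^sub>m k" "mat_inv A * A = 1\<^sub>m k"
proof -
  let ?R = "ring_mat TYPE('a) k ()"
  interpret ring ?R by (rule ring_mat)
  have U: "A \<in> Units ?R"
    by (rule det_non_zero_imp_unit[OF assms])
  have "mat_inv A = inv\<^bsub>?R\<^esub> A"
    unfolding mat_inv_def m_inv_def ring_mat_simps using A by simp
  then show "mat_inv A \<in> carrier_mat k k" "A * mat_inv A = 1\<^sub>m k" "mat_inv A * A = 1\<^sub>m k"
    using Units_inv_closed[OF U] Units_r_inv[OF U] Units_l_inv[OF U] by (simp_all add: ring_mat_simps)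
qed

lemma det_mult_transpose_add_one_neq_0:
  fixes C :: "real mat"
  assumes C: "C \<in> carrier_mat k k"
  shows "det (C * transpose_mat C + 1\<^sub>m k) \<noteq> 0"
proof
  let ?M = "C * transpose_mat C + 1\<^sub>m k"
  assume "det ?M = 0"
  then obtain v where v: "v \<in> carrier_vec k" "v \<noteq> 0\<^sub>v k" "?M *\<^sub>v v = 0\<^sub>v k"
    using det_0_iff_vec_prod_zero[of ?M k] C by auto
  define w where "w = transpose_mat C *\<^sub>v v"
  have w: "w \<in> carrier_vec k"
    unfolding w_def using C v(1) by simp
  have "?M *\<^sub>v v = C *\<^sub>v w + v"
    unfolding w_def using C v(1)
    by (simp add: add_mult_distrib_mat_vec[of _ k k] assoc_mult_mat_vec[of _ k k])
  then have "0 = v \<bullet> (C *\<^sub>v w + v)"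
    using v(1,3) by (metis scalar_prod_right_zero)
  also have "\<dots> = w \<bullet> w + v \<bullet> v"
    unfolding w_def using C v(1)
    by (simp add: scalar_prod_add_distrib[of _ k] transpose_vec_mult_scalar[of _ k k])
  finally show False
    using conjugate_square_ge_0_vec[of w] conjugate_square_greater_0_vec[OF v(1)] v(2) by simp
qed

lemma mult_inverse_eq_of_commute:
  fixes A B M W D :: "'a :: semiring_1 mat"
  assumes carrier: "A \<in> carrier_mat k k" "B \<in> carrier_mat k k" "M \<in> carrier_mat k k"
      "W \<in> carrier_mat k k" "D \<in> carrier_mat k k"
    and inverse: "B * M = 1\<^sub>m k" "M * B = 1\<^sub>m k"
    and commute: "A * M = M * A"
    and solution: "M * D = A * W"
  shows "A * (B * W) = D"
proof -
  have "A * B = (B * M) * A * B"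
    using carrier inverse by simp
  also have "\<dots> = B * (A * M) * B"
    using carrier commute by (simp add: assoc_mult_mat[of _ k k _ k _ k])
  also have "\<dots> = B * A"
    using carrier inverse by (simp add: assoc_mult_mat[of _ k k _ k _ k])
  finally have commute_inverse: "A * B = B * A" .
  have "A * (B * W) = (A * B) * W"
    using carrier by (simp add: assoc_mult_mat[of _ k k _ k _ k])
  also have "\<dots> = B * (M * D)"
    unfolding commute_inverse solution using carrier by (simp add: assoc_mult_mat[of _ k k _ k _ k])
  also have "\<dots> = D"
    using carrier inverse by (simp add: assoc_mult_mat[of _ k k _ k _ k, symmetric])
  finally show ?thesis .
qed

lemma circ_tridiag_solution:
  fixes x :: real and e :: "nat \<Rightarrow> real"
  assumes k: "3 \<le> k"
    and e: "\<And>m. m < k \<Longrightarrow>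
      3 * e m - e ((m + k - 1) mod k) - e ((m + 1) mod k) = x * tridiag_symbol k 1 (-1) 0 m"
  defines "C \<equiv> circ_mat k (tridiag_symbol k 1 0 (-1))"
  shows "- (transpose_mat C * (mat_inv (C * transpose_mat C + 1\<^sub>m k) * (ones_mat k - x \<cdot>\<^sub>m 1\<^sub>m k)))
    = circ_mat k e"
proof -
  let ?D = "tridiag_symbol k (1::real) (-1) 0"
  let ?M = "C * transpose_mat C + 1\<^sub>m k"
  have Ct: "transpose_mat C = circ_mat k ?D"
    unfolding C_def using k by (rule circ_mat_tridiag_transpose)
  have M: "?M = circ_mat k (tridiag_symbol k 3 (-1) (-1))"
    unfolding Ct unfolding C_def circ_mat_tridiag_mult[OF k] one_mat_circ circ_mat_add
    by (rule circ_mat_cong) (use k in \<open>auto simp: tridiag_symbol_def mod_less_double\<close>)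
  have W: "ones_mat k - x \<cdot>\<^sub>m 1\<^sub>m k = circ_mat k (\<lambda>m. if m = 0 then 1 - x else 1)"
    unfolding ones_mat_circ one_mat_circ circ_mat_smult circ_mat_minus by (rule circ_mat_cong) simp
  have "?M * circ_mat k (\<lambda>m. - e m) = circ_mat k (\<lambda>m. - x * ?D m)"
    unfolding M circ_mat_tridiag_mult[OF k] by (rule circ_mat_cong) (simp add: e[symmetric])
  also have "\<dots> = transpose_mat C * (ones_mat k - x \<cdot>\<^sub>m 1\<^sub>m k)"
    unfolding Ct W circ_mat_tridiag_mult[OF k]
    by (rule circ_mat_cong) (use k in \<open>auto simp: tridiag_symbol_def mod_less_double\<close>)
  finally have solution: "?M * circ_mat k (\<lambda>m. - e m) = transpose_mat C * (ones_mat k - x \<cdot>\<^sub>m 1\<^sub>m k)" .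
  have C: "C \<in> carrier_mat k k"
    unfolding C_def by simp
  have "?M \<in> carrier_mat k k"
    unfolding M by simp
  note inverse = mat_inv_of_det_nonzero[OF this det_mult_transpose_add_one_neq_0[OF C]]
  have commute: "transpose_mat C * ?M = ?M * transpose_mat C"
    unfolding M unfolding Ct by (rule circ_mat_mult_commute)
  have "transpose_mat C * (mat_inv ?M * (ones_mat k - x \<cdot>\<^sub>m 1\<^sub>m k)) = circ_mat k (\<lambda>m. - e m)"
    by (rule mult_inverse_eq_of_commute[OF _ inverse(1) _ _ _ inverse(3,2) commute solution])
      (use C in \<open>simp_all add: W\<close>)
  then show ?thesis
    by (simp add: circ_mat_uminus)
qed

lemma twisted_periodic_recurrence:
  fixes f :: "nat \<Rightarrow> 'a :: comm_ring_1"
  assumes k: "3 \<le> k" and m: "m < k"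
    and rec: "\<And>j. f (j + 2) = 3 * f (j + 1) - f j"
    and twist: "f k - f 0 = x" "f (k + 1) - f 1 = x"
  defines "e \<equiv> \<lambda>m. f (if m = 0 then k else m)"
  shows "3 * e m - e ((m + k - 1) mod k) - e ((m + 1) mod k) = x * tridiag_symbol k 1 (-1) 0 m"
proof -
  have rec': "f (j + 1) = 3 * f j - f (j - 1)" if "1 \<le> j" for j
    using rec[of "j - 1"] that by (simp add: numeral_2_eq_2)
  consider "m = 0" | "m = 1" | "2 \<le> m" by linarith
  then show ?thesis
  proof cases
    case 1
    then show ?thesis
      using k twist(2) rec'[of k] by (simp add: e_def tridiag_symbol_def mod_less_double)
  next
    case 2
    then show ?thesis
      using k twist(1) rec'[of 1] by (simp add: e_def tridiag_symbol_def mod_less_double)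
        (metis minus_diff_eq)
  next
    case 3
    then show ?thesis
      using k m rec'[of m] by (cases "m + 1 = k") (auto simp: e_def tridiag_symbol_def mod_less_double)
  qed
qed

definition rho_plus :: real where "rho_plus = (3 + sqrt 5) / 2"
definition rho_minus :: real where "rho_minus = (3 - sqrt 5) / 2"

lemma rho_bounds: "1 < rho_plus" "0 < rho_minus" "rho_minus < 1"
proof -
  have sqrt_5: "1 < sqrt (5::real)" "sqrt (5::real) < 3"
    by (simp_all add: real_less_rsqrt real_sqrt_less_iff[of 5 "3\<^sup>2", simplified])
  show "1 < rho_plus" "0 < rho_minus" "rho_minus < 1"
    unfolding rho_plus_def rho_minus_def add_divide_distrib diff_divide_distrib using sqrt_5 by linarith+
qed

lemma rho_plus_minus:
  "rho_plus * rho_minus = 1" "rho_plus + rho_minus = 3" "2 * (1 + rho_plus) = 5 + sqrt 5"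
  by (simp_all add: rho_plus_def rho_minus_def field_simps)

lemma rho_squares: "rho_plus\<^sup>2 = 3 * rho_plus - 1" "rho_minus\<^sup>2 = 3 * rho_minus - 1"
  by (simp_all add: rho_plus_def rho_minus_def power2_eq_square field_simps)

lemma one_minus_rho_power_neq_0:
  assumes "1 \<le> k"
  shows "1 - rho_plus ^ k \<noteq> 0" "1 - rho_minus ^ k \<noteq> 0"
proof -
  have "1 < rho_plus ^ k" "rho_minus ^ k < 1"
    using assms rho_bounds by (simp_all add: one_less_power power_less_one_iff)
  then show "1 - rho_plus ^ k \<noteq> 0" "1 - rho_minus ^ k \<noteq> 0"
    by simp_all
qed

lemma power_recurrence:
  fixes y :: "'a :: comm_ring_1"
  assumes "y\<^sup>2 = p * y - q"
  shows "y ^ (j + 2) = p * y ^ (j + 1) - q * y ^ j"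
proof -
  have "y ^ (j + 2) = y ^ j * y\<^sup>2"
    by (rule power_add)
  then show ?thesis
    using assms by (simp add: algebra_simps)
qed

(* The general solution A rho_plus^j + B rho_minus^j of the recurrence, with A and B fixed by
   the twist condition of wheel_coeff_twist. *)

definition wheel_coeff :: "real \<Rightarrow> nat \<Rightarrow> nat \<Rightarrow> real" where
  "wheel_coeff x k j = - (2 * x / (5 + sqrt 5)) *
     (rho_plus ^ j / (1 - rho_plus ^ k) + rho_plus * rho_minus ^ j / (1 - rho_minus ^ k))"

lemma wheel_coeff_rec: "wheel_coeff x k (j + 2) = 3 * wheel_coeff x k (j + 1) - wheel_coeff x k j"
  unfolding wheel_coeff_def power_recurrence[OF rho_squares(1)] power_recurrence[OF rho_squares(2)]
  by (simp add: algebra_simps add_divide_distrib diff_divide_distrib)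

lemma wheel_coeff_twist:
  assumes "1 \<le> k" "j \<le> 1"
  shows "wheel_coeff x k (k + j) - wheel_coeff x k j = x"
proof -
  have shift:
      "rho_plus ^ (k + j) / (1 - rho_plus ^ k) = rho_plus ^ j / (1 - rho_plus ^ k) - rho_plus ^ j"
      "rho_minus ^ (k + j) / (1 - rho_minus ^ k) = rho_minus ^ j / (1 - rho_minus ^ k) - rho_minus ^ j"
    using one_minus_rho_power_neq_0[OF assms(1)] by (simp_all add: power_add field_simps)
  have "wheel_coeff x k (k + j) - wheel_coeff x k j =
      2 * x / (5 + sqrt 5) * (rho_plus ^ j + rho_plus * rho_minus ^ j)"
    unfolding wheel_coeff_def times_divide_eq_right[symmetric] shift by (simp add: algebra_simps)
  also have "\<dots> = 2 * x * (1 + rho_plus) / (5 + sqrt 5)"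
    using assms(2) rho_plus_minus(1) by (cases j) (auto simp: algebra_simps)
  also have "\<dots> = x"
    using rho_plus_minus(3) rho_bounds(1) by (simp add: field_simps)
  finally show ?thesis .
qed

lemma three_plus_minus_sqrt_5: "3 + sqrt 5 = 2 * rho_plus" "3 - sqrt 5 = 2 * rho_minus"
  by (simp_all add: rho_plus_def rho_minus_def)

lemma wheel_coeff_explicit:
  assumes "2 \<le> n" "1 \<le> j" "j \<le> n"
  shows "wheel_coeff x (n - 1) j = - (x * 2 ^ (n - j) / (5 + sqrt 5)) *
     ((3 + sqrt 5) ^ j / (2 ^ (n - 1) - (3 + sqrt 5) ^ (n - 1))
      + 2 * (3 - sqrt 5) ^ (j - 1) / (2 ^ (n - 1) - (3 - sqrt 5) ^ (n - 1)))"
proof -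
  define i r where "i = j - 1" and "r = n - j"
  have j: "j = Suc i" and n: "n = Suc (i + r)"
    using assms by (simp_all add: i_def r_def)
  define T where "T = (2::real) ^ (i + r)"
  have "0 < 5 + sqrt (5::real)"
    by (simp add: add_pos_nonneg)
  then have nz: "1 - rho_plus ^ (i + r) \<noteq> 0" "1 - rho_minus ^ (i + r) \<noteq> 0" "5 + sqrt 5 \<noteq> (0::real)"
    using one_minus_rho_power_neq_0[of "i + r"] assms n by simp_all
  have powers_of_2: "T \<noteq> 0" "2 ^ r * 2 ^ Suc i = 2 * T" "2 ^ r * 2 ^ i = T"
    by (simp_all add: T_def power_add)
  have scale: "- (x * p / s) * (a * A / (c * u) + 2 * (b * B) / (c * v)) = - (2 * x / s) * (A / u + B / v)"
    if "c \<noteq> 0" "u \<noteq> 0" "v \<noteq> 0" "s \<noteq> 0" "p * a = 2 * c" "p * b = c" for p a b A B u v s c :: real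
  proof -
    have "- (x * p / s) * (a * A / (c * u) + 2 * (b * B) / (c * v)) =
        - (x / s) * ((p * a) * A / (c * u) + 2 * ((p * b) * B) / (c * v))"
      by (simp add: algebra_simps)
    then show ?thesis
      unfolding that(5,6) using that(1-4) by (simp add: field_simps)
  qed
  have "- (x * 2 ^ (n - j) / (5 + sqrt 5)) *
     ((3 + sqrt 5) ^ j / (2 ^ (n - 1) - (3 + sqrt 5) ^ (n - 1))
      + 2 * (3 - sqrt 5) ^ (j - 1) / (2 ^ (n - 1) - (3 - sqrt 5) ^ (n - 1))) =
    - (x * 2 ^ r / (5 + sqrt 5)) *
     (2 ^ Suc i * rho_plus ^ Suc i / (T * (1 - rho_plus ^ (i + r)))
      + 2 * (2 ^ i * rho_minus ^ i) / (T * (1 - rho_minus ^ (i + r))))"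
    unfolding three_plus_minus_sqrt_5 j n T_def by (simp add: power_mult_distrib right_diff_distrib)
  also have "\<dots> = - (2 * x / (5 + sqrt 5)) *
     (rho_plus ^ Suc i / (1 - rho_plus ^ (i + r)) + rho_minus ^ i / (1 - rho_minus ^ (i + r)))"
    by (rule scale) (use nz powers_of_2 in simp_all)
  also have "\<dots> = wheel_coeff x (n - 1) j"
    using rho_plus_minus(1) by (simp add: wheel_coeff_def j n mult.assoc[symmetric])
  finally show ?thesis ..
qed

lemma wheel_coeff_explicit_period:
  assumes "2 \<le> n"
  shows "wheel_coeff x (n - 1) (n - 1) = 2 * x / sqrt 5 *
     (((3 + sqrt 5) ^ (n - 2) - 2 ^ (n - 2)) / (2 ^ (n - 1) - (3 + sqrt 5) ^ (n - 1))
      - ((3 - sqrt 5) ^ (n - 2) - 2 ^ (n - 2)) / (2 ^ (n - 1) - (3 - sqrt 5) ^ (n - 1)))"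
proof -
  define i where "i = n - 2"
  have n: "n - 1 = Suc i" "n - 2 = i"
    using assms by (simp_all add: i_def)
  define T P Q where "T = (2::real) ^ i" and "P = rho_plus ^ i" and "Q = rho_minus ^ i"
  have "0 < 5 + sqrt (5::real)"
    by (simp add: add_pos_nonneg)
  then have nz: "T \<noteq> 0" "1 - P * rho_plus \<noteq> 0" "1 - Q * rho_minus \<noteq> 0" "sqrt 5 \<noteq> (0::real)"
      "5 + sqrt 5 \<noteq> (0::real)"
    using one_minus_rho_power_neq_0[of "Suc i"] by (simp_all add: T_def P_def Q_def mult.commute)
  have PQ: "P * Q = 1"
    using rho_plus_minus(1) by (simp add: P_def Q_def power_mult_distrib[symmetric])
  have cancel: "(T * R - T) / (2 * T - 2 * T * (R * \<rho>)) = (R - 1) / (2 * (1 - R * \<rho>))" for R \<rho> :: real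
  proof -
    have "T * R - T = T * (R - 1)" "2 * T - 2 * T * (R * \<rho>) = T * (2 * (1 - R * \<rho>))"
      by (simp_all add: algebra_simps)
    then show ?thesis
      using nz(1) by simp
  qed
  have core: "2 * x / s * ((P - 1) / (2 * u) - (Q - 1) / (2 * v)) =
      - (2 * x / r) * (P * a / u + a * (Q * b) / v)"
    if "a * a = 3 * a - 1" "b = 3 - a" "s = 2 * a - 3" "s \<noteq> 0" "u = 1 - P * a" "u \<noteq> 0"
      "v = 1 - Q * b" "v \<noteq> 0" "r = 5 + s" "r \<noteq> 0" for s a b u v r :: real
    by (simp add: field_simps that(4,6,8,10)) (use that(1-3,5,7,9) PQ in Groebner_Basis.algebra)
  have rho: "rho_plus * rho_plus = 3 * rho_plus - 1" "rho_minus = 3 - rho_plus" "sqrt 5 = 2 * rho_plus - 3"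
    using rho_squares(1) rho_plus_minus(2) three_plus_minus_sqrt_5(1) by (simp_all add: power2_eq_square)
  have "2 * x / sqrt 5 *
     (((3 + sqrt 5) ^ (n - 2) - 2 ^ (n - 2)) / (2 ^ (n - 1) - (3 + sqrt 5) ^ (n - 1))
      - ((3 - sqrt 5) ^ (n - 2) - 2 ^ (n - 2)) / (2 ^ (n - 1) - (3 - sqrt 5) ^ (n - 1))) =
    2 * x / sqrt 5 * ((P - 1) / (2 * (1 - P * rho_plus)) - (Q - 1) / (2 * (1 - Q * rho_minus)))"
    unfolding three_plus_minus_sqrt_5 n cancel[symmetric]
    by (simp add: T_def P_def Q_def power_mult_distrib algebra_simps)
  also have "\<dots> = - (2 * x / (5 + sqrt 5)) *
      (P * rho_plus / (1 - P * rho_plus) + rho_plus * (Q * rho_minus) / (1 - Q * rho_minus))"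
    by (rule core) (use nz rho in simp_all)
  also have "\<dots> = wheel_coeff x (n - 1) (n - 1)"
    unfolding wheel_coeff_def n(1) P_def Q_def by (simp add: ac_simps)
  finally show ?thesis ..
qed

theorem mainTheorem9:
  fixes n :: nat
  assumes "n \<ge> 4"
  defines "C \<equiv> circ_mat (n - 1)
             (\<lambda>i. if i = 0 then 1 else if i = n - 2 then -1 else (0::real))"
  defines "X \<equiv> mat_inv (C * transpose_mat C + 1\<^sub>m (n - 1))
             * (ones_mat (n - 1) - of_nat n \<cdot>\<^sub>m 1\<^sub>m (n - 1))"
  defines "Y \<equiv> - (transpose_mat C * X)"
  defines "d \<equiv> (\<lambda>j::nat.
     if j = 0 then
       2 * real n / sqrt 5 *
         (((3 + sqrt 5) ^ (n - 2) - 2 ^ (n - 2)) / (2 ^ (n - 1) - (3 + sqrt 5) ^ (n - 1))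
        - ((3 - sqrt 5) ^ (n - 2) - 2 ^ (n - 2)) / (2 ^ (n - 1) - (3 - sqrt 5) ^ (n - 1)))
     else
       - (real n * 2 ^ (n - j) / (5 + sqrt 5)) *
         ((3 + sqrt 5) ^ j / (2 ^ (n - 1) - (3 + sqrt 5) ^ (n - 1))
        + 2 * (3 - sqrt 5) ^ (j - 1) / (2 ^ (n - 1) - (3 - sqrt 5) ^ (n - 1))))"
  shows "Y = circ_mat (n - 1) d"
proof -
  define k where "k = n - 1"
  have k: "3 \<le> k"
    using assms(1) by (simp add: k_def)
  have C: "C = circ_mat k (tridiag_symbol k 1 0 (-1))"
    unfolding C_def k_def by (rule circ_mat_cong) (use assms(1) in \<open>auto simp: tridiag_symbol_def\<close>)
  define e where "e = (\<lambda>m. wheel_coeff (real n) k (if m = 0 then k else m))"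
  have "3 * e m - e ((m + k - 1) mod k) - e ((m + 1) mod k) = real n * tridiag_symbol k 1 (-1) 0 m"
    if "m < k" for m
    unfolding e_def
    by (rule twisted_periodic_recurrence[OF k that wheel_coeff_rec])
      (use k wheel_coeff_twist[of k 0] wheel_coeff_twist[of k 1] in simp_all)
  then have "Y = circ_mat k e"
    unfolding Y_def X_def C k_def[symmetric] by (rule circ_tridiag_solution[OF k])
  also have "\<dots> = circ_mat k d"
  proof (rule circ_mat_cong)
    fix m assume "m < k"
    then have "m \<le> n"
      by (simp add: k_def)
    then show "e m = d m"
      using assms(1) wheel_coeff_explicit_period[of n "real n"] wheel_coeff_explicit[of n m "real n"]
      by (simp add: e_def d_def k_def)
  qed
  finally show ?thesis
    unfolding k_def .
qed

end
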